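(* Let $(\mathcal S,\mathcal A,P,r)$ be any finite MDP (general/multichain) and $(g^\star,h^\star)$ a solution of the modified Bellman equations. Let $V^0\in\mathbb R^n$, $0\le\lambda_k<1$ for $k\ge1$, and $V^k=\lambda_kV^{k-1}+(1-\lambda_k)TV^{k-1}$ for $k\ge1$ (Relaxed Value Iteration). Then for every $k\ge1$, \[\Big\|\frac{V^k-V^0}{\sum_{i=1}^k(1-\lambda_i)}-g^\star\Big\|_\infty\le\frac{2\big(1-\prod_{i=1}^k\lambda_i\big)}{\sum_{i=1}^k(1-\lambda_i)}\|V^0-h^\star\|_\infty.\]
   Context: An MDP $(\mathcal S,\mathcal A,P,r)$ has finite state space $\mathcal S$ ($|\mathcal S|=n$, functions identified with $\mathbb R^n$), finite action space, transition probabilities $P(s'\mid s,a)$ and bounded reward $r$. The Bellman optimality operator is $(TV)(s)=\max_a\{r(s,a)+\sum_{s'}P(s'\mid s,a)V(s')\}$. $g^\star(s)=\max_\pi\liminf_{T\to\infty}\frac1T\mathbb E_\pi[\sum_{t=0}^{T-1}r(s_t,a_t)\mid s_0=s]$ is the optimal average reward. A pair $(g,h)$ solves the modified Bellman equations if $\max_a\sum_{s'}P(s'\mid s,a)g(s')=g(s)$ and $\max_a\{r(s,a)+\sum_{s'}P(s'\mid s,a)h(s')\}=h(s)+g(s)$ for all $s$, with some policy attaining both maxima simultaneously; the first component of any solution equals $g^\star$. *)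

theory Defs
  imports "HOL-Analysis.Analysis"
begin

definition is_mdp :: "('s::finite \<Rightarrow> 'a::finite \<Rightarrow> 's \<Rightarrow> real) \<Rightarrow> bool" where
  "is_mdp P \<longleftrightarrow> (\<forall>s a s'. 0 \<le> P s a s') \<and> (\<forall>s a. (\<Sum>s'\<in>UNIV. P s a s') = 1)"

definition bellman ::
  "('s::finite \<Rightarrow> 'a::finite \<Rightarrow> 's \<Rightarrow> real) \<Rightarrow> ('s \<Rightarrow> 'a \<Rightarrow> real) \<Rightarrow> ('s \<Rightarrow> real) \<Rightarrow> 's \<Rightarrow> real" where
  "bellman P r V s = Max (range (\<lambda>a. r s a + (\<Sum>s'\<in>UNIV. P s a s' * V s')))"

definition modified_bellman_solution ::
  "('s::finite \<Rightarrow> 'a::finite \<Rightarrow> 's \<Rightarrow> real) \<Rightarrow> ('s \<Rightarrow> 'a \<Rightarrow> real) \<Rightarrow> ('s \<Rightarrow> real) \<Rightarrow> ('s \<Rightarrow> real) \<Rightarrow> bool" where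
  "modified_bellman_solution P r g h \<longleftrightarrow>
     (\<forall>s. Max (range (\<lambda>a. \<Sum>s'\<in>UNIV. P s a s' * g s')) = g s) \<and>
     (\<forall>s. Max (range (\<lambda>a. r s a + (\<Sum>s'\<in>UNIV. P s a s' * h s'))) = h s + g s) \<and>
     (\<exists>\<pi>::'s \<Rightarrow> 'a. \<forall>s. (\<Sum>s'\<in>UNIV. P s (\<pi> s) s' * g s') = g s \<and>
                        r s (\<pi> s) + (\<Sum>s'\<in>UNIV. P s (\<pi> s) s' * h s') = h s + g s)"

definition sup_norm :: "('s::finite \<Rightarrow> real) \<Rightarrow> real" where
  "sup_norm f = Max (range (\<lambda>s. \<bar>f s\<bar>))"

end

theory Submission
  imports Defs
begin

text \<open>Let \<open>S n = (\<Sum>i=1..n. 1 - \<lambda> i)\<close>. Because \<open>T (h\<^sup>\<star> + c g\<^sup>\<star>) = h\<^sup>\<star> + (c + 1) g\<^sup>\<star>\<close> for \<open>c \<ge> 0\<close>,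
  the sequence \<open>U n = h\<^sup>\<star> + S n g\<^sup>\<star>\<close> is itself a relaxed value iteration, started at \<open>h\<^sup>\<star>\<close>.
  The relaxed Bellman step is nonexpansive in the sup norm, so \<open>e n = V n - U n\<close> stays within
  \<open>E = \<parallel>V 0 - h\<^sup>\<star>\<parallel>\<close> of zero; hence \<open>e n - e 0\<close> is a convex combination, with weight \<open>\<lambda> n\<close>,
  of \<open>e (n - 1) - e 0\<close> and a vector of norm at most \<open>2 E\<close>, which gives
  \<open>\<parallel>e n - e 0\<parallel> \<le> 2 E (1 - (\<Prod>i=1..n. \<lambda> i))\<close>. Finally \<open>V k - V 0 - S k g\<^sup>\<star> = e k - e 0\<close>.\<close>

lemma abs_le_sup_norm: "\<bar>f s\<bar> \<le> sup_norm (f :: 's::finite \<Rightarrow> real)"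
  unfolding sup_norm_def by (rule Max_ge) auto

lemma sup_norm_le: "(\<And>s. \<bar>f s\<bar> \<le> c) \<Longrightarrow> sup_norm (f :: 's::finite \<Rightarrow> real) \<le> c"
  unfolding sup_norm_def by (subst Max_le_iff) auto

lemma abs_convex_combination_le:
  fixes l x y :: real
  assumes "0 \<le> l" "l \<le> 1"
  shows "\<bar>l * x + (1 - l) * y\<bar> \<le> l * \<bar>x\<bar> + (1 - l) * \<bar>y\<bar>"
proof -
  have "\<bar>l * x + (1 - l) * y\<bar> \<le> \<bar>l * x\<bar> + \<bar>(1 - l) * y\<bar>" by (rule abs_triangle_ineq)
  also have "\<dots> = l * \<bar>x\<bar> + (1 - l) * \<bar>y\<bar>" using assms by (simp add: abs_mult)
  finally show ?thesis .
qed

lemma Max_range_le_Max_range_add: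
  fixes f g :: "'a::finite \<Rightarrow> real"
  assumes "\<And>a. f a \<le> g a + c"
  shows "Max (range f) \<le> Max (range g) + c"
proof -
  have "Max (range f) \<in> range f" by (rule Max_in) auto
  then obtain a where a: "Max (range f) = f a" by blast
  have "g a \<le> Max (range g)" by (rule Max_ge) auto
  with a assms[of a] show ?thesis by linarith
qed

lemma expectation_le_add:
  assumes "is_mdp P" and "\<And>s'. X s' \<le> Y s' + c"
  shows "(\<Sum>s'\<in>UNIV. P s a s' * X s') \<le> (\<Sum>s'\<in>UNIV. P s a s' * Y s') + c"
proof -
  have "(\<Sum>s'\<in>UNIV. P s a s' * X s') \<le> (\<Sum>s'\<in>UNIV. P s a s' * (Y s' + c))"
    using assms unfolding is_mdp_def by (intro sum_mono mult_left_mono) auto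
  also have "\<dots> = (\<Sum>s'\<in>UNIV. P s a s' * Y s') + c * (\<Sum>s'\<in>UNIV. P s a s')"
    by (simp add: algebra_simps sum.distrib sum_distrib_left)
  finally show ?thesis using assms(1) unfolding is_mdp_def by simp
qed

lemma bellman_nonexpansive:
  assumes mdp: "is_mdp P" and dist: "\<And>s. \<bar>V s - W s\<bar> \<le> c"
  shows "\<bar>bellman P r V s - bellman P r W s\<bar> \<le> c"
proof -
  have le: "bellman P r X s \<le> bellman P r Y s + c" if "\<And>s. X s \<le> Y s + c" for X Y
    unfolding bellman_def
  proof (rule Max_range_le_Max_range_add)
    fix a
    show "r s a + (\<Sum>s'\<in>UNIV. P s a s' * X s') \<le> r s a + (\<Sum>s'\<in>UNIV. P s a s' * Y s') + c"
      using expectation_le_add[OF mdp that] by simp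
  qed
  have "V s' \<le> W s' + c" "W s' \<le> V s' + c" for s'
    using dist[of s'] by (auto simp: abs_le_iff)
  then have "bellman P r V s \<le> bellman P r W s + c" "bellman P r W s \<le> bellman P r V s + c"
    using le by blast+
  then show ?thesis by linarith
qed

lemma bellman_shift:
  assumes sol: "modified_bellman_solution P r g h" and c: "0 \<le> c"
  shows "bellman P r (\<lambda>s. h s + c * g s) = (\<lambda>s. h s + (c + 1) * g s)"
proof
  fix s
  let ?Qh = "\<lambda>a. r s a + (\<Sum>s'\<in>UNIV. P s a s' * h s')"
  let ?Qg = "\<lambda>a. \<Sum>s'\<in>UNIV. P s a s' * g s'"
  have Qg_max: "Max (range ?Qg) = g s" and Qh_max: "Max (range ?Qh) = h s + g s"
    using sol unfolding modified_bellman_solution_def by auto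
  obtain \<pi> where \<pi>: "?Qg (\<pi> s) = g s" "?Qh (\<pi> s) = h s + g s"
    using sol unfolding modified_bellman_solution_def by blast
  have split: "r s a + (\<Sum>s'\<in>UNIV. P s a s' * (h s' + c * g s')) = ?Qh a + c * ?Qg a" for a
    by (simp add: algebra_simps sum.distrib sum_distrib_left)
  have "Max (range (\<lambda>a. ?Qh a + c * ?Qg a)) = h s + (c + 1) * g s"
  proof (rule Max_eqI)
    fix y assume "y \<in> range (\<lambda>a. ?Qh a + c * ?Qg a)"
    then obtain a where y: "y = ?Qh a + c * ?Qg a" by blast
    have "?Qh a \<le> Max (range ?Qh)" "?Qg a \<le> Max (range ?Qg)"
      by (rule Max_ge; simp)+
    then have "?Qh a + c * ?Qg a \<le> (h s + g s) + c * g s"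
      unfolding Qh_max Qg_max using mult_left_mono[OF _ c] by (meson add_mono)
    then show "y \<le> h s + (c + 1) * g s"
      unfolding y by (simp add: algebra_simps)
  next
    show "h s + (c + 1) * g s \<in> range (\<lambda>a. ?Qh a + c * ?Qg a)"
      using \<pi> by (intro image_eqI[where x = "\<pi> s"]) (auto simp: algebra_simps)
  qed simp
  then show "bellman P r (\<lambda>s. h s + c * g s) s = h s + (c + 1) * g s"
    unfolding bellman_def split .
qed

definition relaxed_value_iteration ::
  "('s::finite \<Rightarrow> 'a::finite \<Rightarrow> 's \<Rightarrow> real) \<Rightarrow> ('s \<Rightarrow> 'a \<Rightarrow> real) \<Rightarrow> (nat \<Rightarrow> real) \<Rightarrow>
    (nat \<Rightarrow> 's \<Rightarrow> real) \<Rightarrow> bool" where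
  "relaxed_value_iteration P r lam V \<longleftrightarrow>
     (\<forall>n. V (Suc n) = (\<lambda>s. lam (Suc n) * V n s + (1 - lam (Suc n)) * bellman P r (V n) s))"

lemma relaxed_value_iteration_bias_gain:
  assumes sol: "modified_bellman_solution P r g h"
    and lam: "\<And>i. 1 \<le> i \<Longrightarrow> lam i \<le> 1"
  shows "relaxed_value_iteration P r lam (\<lambda>n s. h s + (\<Sum>i=1..n. 1 - lam i) * g s)"
  unfolding relaxed_value_iteration_def
proof (intro allI ext)
  fix n s
  define S where "S = (\<Sum>i=1..n. 1 - lam i)"
  have "S \<ge> 0"
    unfolding S_def using lam by (intro sum_nonneg) auto
  then have "bellman P r (\<lambda>s. h s + S * g s) s = h s + (S + 1) * g s"
    by (simp add: bellman_shift[OF sol])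
  then show "h s + (\<Sum>i=1..Suc n. 1 - lam i) * g s = lam (Suc n) * (h s + S * g s) +
      (1 - lam (Suc n)) * bellman P r (\<lambda>s. h s + S * g s) s"
    by (simp add: S_def algebra_simps)
qed

lemma relaxed_value_iteration_nonexpansive:
  assumes mdp: "is_mdp P"
    and lam: "\<And>n. 0 \<le> lam (Suc n) \<and> lam (Suc n) \<le> 1"
    and V: "relaxed_value_iteration P r lam V" and W: "relaxed_value_iteration P r lam W"
    and dist0: "\<And>s. \<bar>V 0 s - W 0 s\<bar> \<le> c"
  shows "\<bar>V n s - W n s\<bar> \<le> c"
proof (induction n arbitrary: s)
  case 0
  show ?case by (rule dist0)
next
  case (Suc n)
  let ?l = "lam (Suc n)"
  have "V (Suc n) s - W (Suc n) s =
      ?l * (V n s - W n s) + (1 - ?l) * (bellman P r (V n) s - bellman P r (W n) s)"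
    using V W unfolding relaxed_value_iteration_def by (simp add: algebra_simps)
  also have "\<bar>\<dots>\<bar> \<le> ?l * \<bar>V n s - W n s\<bar> + (1 - ?l) * \<bar>bellman P r (V n) s - bellman P r (W n) s\<bar>"
    using lam by (intro abs_convex_combination_le) auto
  also have "\<dots> \<le> ?l * c + (1 - ?l) * c"
    using lam Suc bellman_nonexpansive[OF mdp Suc] by (intro add_mono mult_left_mono) auto
  finally show ?case by (simp add: algebra_simps)
qed

lemma relaxed_recursion_drift:
  fixes x d lam :: "nat \<Rightarrow> real"
  assumes step: "\<And>n. x (Suc n) = lam (Suc n) * x n + (1 - lam (Suc n)) * d n"
    and lam: "\<And>n. 0 \<le> lam (Suc n) \<and> lam (Suc n) \<le> 1"
    and d: "\<And>n. \<bar>d n - x 0\<bar> \<le> C"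
  shows "\<bar>x n - x 0\<bar> \<le> C * (1 - (\<Prod>i=1..n. lam i))"
proof (induction n)
  case 0
  show ?case by simp
next
  case (Suc n)
  let ?l = "lam (Suc n)"
  have "x (Suc n) - x 0 = ?l * (x n - x 0) + (1 - ?l) * (d n - x 0)"
    unfolding step by (simp add: algebra_simps)
  also have "\<bar>\<dots>\<bar> \<le> ?l * \<bar>x n - x 0\<bar> + (1 - ?l) * \<bar>d n - x 0\<bar>"
    using lam by (intro abs_convex_combination_le) auto
  also have "\<dots> \<le> ?l * (C * (1 - (\<Prod>i=1..n. lam i))) + (1 - ?l) * C"
    using lam Suc d by (intro add_mono mult_left_mono) auto
  also have "\<dots> = C * (1 - (\<Prod>i=1..Suc n. lam i))"
    by (simp add: algebra_simps)
  finally show ?case .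
qed

lemma relaxed_value_iteration_drift:
  assumes mdp: "is_mdp P"
    and lam: "\<And>n. 0 \<le> lam (Suc n) \<and> lam (Suc n) \<le> 1"
    and V: "relaxed_value_iteration P r lam V" and W: "relaxed_value_iteration P r lam W"
    and dist0: "\<And>s. \<bar>V 0 s - W 0 s\<bar> \<le> c"
  shows "\<bar>(V n s - W n s) - (V 0 s - W 0 s)\<bar> \<le> 2 * c * (1 - (\<Prod>i=1..n. lam i))"
proof (rule relaxed_recursion_drift[where x = "\<lambda>n. V n s - W n s"])
  fix n
  show "V (Suc n) s - W (Suc n) s = lam (Suc n) * (V n s - W n s) +
      (1 - lam (Suc n)) * (bellman P r (V n) s - bellman P r (W n) s)"
    using V W unfolding relaxed_value_iteration_def by (simp add: algebra_simps)
  have "\<bar>bellman P r (V n) s - bellman P r (W n) s\<bar> \<le> c"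
    using bellman_nonexpansive[OF mdp relaxed_value_iteration_nonexpansive[OF assms]] .
  with dist0[of s] show "\<bar>(bellman P r (V n) s - bellman P r (W n) s) - (V 0 s - W 0 s)\<bar> \<le> 2 * c"
    by linarith
qed (use lam in auto)

theorem theorem7:
  fixes P :: "'s::finite \<Rightarrow> 'a::finite \<Rightarrow> 's \<Rightarrow> real"
    and r :: "'s \<Rightarrow> 'a \<Rightarrow> real"
    and gstar hstar :: "'s \<Rightarrow> real"
    and lam :: "nat \<Rightarrow> real"
    and V :: "nat \<Rightarrow> 's \<Rightarrow> real"
    and k :: nat
  assumes mdp: "is_mdp P"
    and sol: "modified_bellman_solution P r gstar hstar"
    and lam: "\<And>i. i \<ge> 1 \<Longrightarrow> 0 \<le> lam i \<and> lam i < 1"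
    and iter: "\<And>i. i \<ge> 1 \<Longrightarrow>
                 V i = (\<lambda>s. lam i * V (i - 1) s + (1 - lam i) * bellman P r (V (i - 1)) s)"
    and k: "k \<ge> 1"
  shows "sup_norm (\<lambda>s. (V k s - V 0 s) / (\<Sum>i=1..k. 1 - lam i) - gstar s)
         \<le> 2 * (1 - (\<Prod>i=1..k. lam i)) / (\<Sum>i=1..k. 1 - lam i) * sup_norm (\<lambda>s. V 0 s - hstar s)"
proof -
  define S where "S = (\<Sum>i=1..k. 1 - lam i)"
  define U where "U n s = hstar s + (\<Sum>i=1..n. 1 - lam i) * gstar s" for n s
  define E where "E = sup_norm (\<lambda>s. V 0 s - hstar s)"
  have lam_Suc: "0 \<le> lam (Suc n) \<and> lam (Suc n) \<le> 1" for n
    using lam[of "Suc n"] by simp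
  have U: "relaxed_value_iteration P r lam U"
    unfolding U_def using relaxed_value_iteration_bias_gain[OF sol] lam by (simp add: less_imp_le)
  have V: "relaxed_value_iteration P r lam V"
    unfolding relaxed_value_iteration_def using iter[of "Suc _"] by simp
  have dist0: "\<bar>V 0 s - U 0 s\<bar> \<le> E" for s
    unfolding E_def U_def using abs_le_sup_norm by simp
  have S_pos: "S > 0"
    unfolding S_def using k lam by (intro sum_pos2[where i = k]) (auto simp: less_imp_le)
  show ?thesis
    unfolding S_def[symmetric] E_def[symmetric]
  proof (rule sup_norm_le)
    fix s
    have "\<bar>(V k s - V 0 s) / S - gstar s\<bar> = \<bar>(V k s - U k s) - (V 0 s - U 0 s)\<bar> / S"
      using S_pos by (simp add: U_def S_def field_simps)
    also have "\<dots> \<le> 2 * E * (1 - (\<Prod>i=1..k. lam i)) / S"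
      using relaxed_value_iteration_drift[OF mdp lam_Suc V U dist0] S_pos
      by (intro divide_right_mono) auto
    finally show "\<bar>(V k s - V 0 s) / S - gstar s\<bar> \<le> 2 * (1 - (\<Prod>i=1..k. lam i)) / S * E"
      by (simp add: mult_ac)
  qed
qed

end
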